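(* Let $\nu_0=0$ and $s,\gamma,u>0$. Let $y(t;y_0)$ be the solution of $\dot y=F(y)$, $y(0)=y_0\in[0,1]$, where $F(y)=-y(1-y)[s+\gamma(1-y)]+u(1-y)$, and set $y_\infty(y_0)=\lim_{t\to\infty}y(t;y_0)$. (i) If $0<u<s$, or if $u=s$ and $s<\gamma$, then $y_\infty(y_0)=\bar y_2$ for $y_0\in[0,1)$ and $y_\infty(1)=\bar y_1$. (ii) If $s<\gamma$ and $s<u\le\check u$, then $y_\infty(y_0)=\bar y_2$ for $y_0\in[0,\bar y_3)$, $y_\infty(\bar y_3)=\bar y_3$, and $y_\infty(y_0)=\bar y_1$ for $y_0\in(\bar y_3,\bar y_1]$. (iii) If $u>\check u$, or if $s\ge\gamma$ and $s\le u\le\check u$, then $y_\infty(y_0)=\bar y_1$ for all $y_0\in[0,1]$.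
   Context: Here $\check u=\frac1\gamma\big(\frac{s+\gamma}2\big)^2$, $\bar y_1=1$, $\sigma=(1+s/\gamma)^2-4u/\gamma$, and, whenever $\sigma\ge 0$, $\bar y_2=\frac12(1+\frac s\gamma-\sqrt\sigma)$ and $\bar y_3=\frac12(1+\frac s\gamma+\sqrt\sigma)$. The limit $y_\infty(y_0)$ exists because $t\mapsto y(t;y_0)$ is monotone. *)

theory Defs
  imports "HOL-Analysis.Analysis"
begin

definition Fode :: "real \<Rightarrow> real \<Rightarrow> real \<Rightarrow> real \<Rightarrow> real" where
  "Fode s \<gamma> u y = - y * (1 - y) * (s + \<gamma> * (1 - y)) + u * (1 - y)"

definition ucheck :: "real \<Rightarrow> real \<Rightarrow> real" where
  "ucheck s \<gamma> = (1 / \<gamma>) * ((s + \<gamma>) / 2)^2"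

definition sigma :: "real \<Rightarrow> real \<Rightarrow> real \<Rightarrow> real" where
  "sigma s \<gamma> u = (1 + s / \<gamma>)^2 - 4 * u / \<gamma>"

definition ybar1 :: real where "ybar1 = 1"

definition ybar2 :: "real \<Rightarrow> real \<Rightarrow> real \<Rightarrow> real" where
  "ybar2 s \<gamma> u = (1 / 2) * (1 + s / \<gamma> - sqrt (sigma s \<gamma> u))"

definition ybar3 :: "real \<Rightarrow> real \<Rightarrow> real \<Rightarrow> real" where
  "ybar3 s \<gamma> u = (1 / 2) * (1 + s / \<gamma> + sqrt (sigma s \<gamma> u))"

definition is_solution :: "real \<Rightarrow> real \<Rightarrow> real \<Rightarrow> real \<Rightarrow> (real \<Rightarrow> real) \<Rightarrow> bool" where
  "is_solution s \<gamma> u y0 y \<longleftrightarrow> y 0 = y0 \<and>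
     (\<forall>t\<ge>0. (y has_real_derivative Fode s \<gamma> u (y t)) (at t within {0..}))"

end

theory Submission
  imports Defs
begin

text \<open>
  The equation is scalar and autonomous, so its phase line decides everything:
  \<open>F(y) = (1 - y)(\<gamma>y\<^sup>2 - (s + \<gamma>)y + u)\<close>, whose zeros are \<open>1\<close> and, when \<open>\<sigma> \<ge> 0\<close>, the roots
  \<open>ybar2 \<le> ybar3\<close> of the quadratic factor. A Gronwall estimate for \<open>(y - e)\<^sup>2\<close> shows that no
  solution reaches an equilibrium \<open>e\<close> in finite time, so a solution stays between the
  equilibria enclosing its initial value, is monotone there, and converges to the one towards
  which \<open>F\<close> points. The three regimes differ only in the position of \<open>1\<close> relative to
  \<open>ybar2\<close> and \<open>ybar3\<close>, which is read off from \<open>ybar2 + ybar3 = 1 + s/\<gamma>\<close> and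
  \<open>(1 - ybar2)(1 - ybar3) = (u - s)/\<gamma>\<close>.
\<close>

lemma differential_gronwall:
  fixes z z' :: "real \<Rightarrow> real"
  assumes "a \<le> b" and "continuous_on {a..b} z"
    and "\<And>t. a < t \<Longrightarrow> t < b \<Longrightarrow> (z has_real_derivative z' t) (at t)"
    and "\<And>t. a < t \<Longrightarrow> t < b \<Longrightarrow> z' t \<le> M * z t"
  shows "z b \<le> z a * exp (M * (b - a))"
proof -
  have "z b * exp (- M * (b - a)) \<le> z a * exp (- M * (a - a))"
  proof (rule DERIV_nonpos_imp_decreasing_open[OF assms(1)])
    fix t assume t: "a < t" "t < b"
    have "((\<lambda>t. z t * exp (- M * (t - a))) has_real_derivative
        (z' t - M * z t) * exp (- M * (t - a))) (at t)"
      using assms(3)[OF t] by (auto intro!: derivative_eq_intros simp: algebra_simps)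
    moreover have "(z' t - M * z t) * exp (- M * (t - a)) \<le> 0"
      using assms(4)[OF t] by (simp add: mult_nonpos_nonneg)
    ultimately show "\<exists>d. ((\<lambda>t. z t * exp (- M * (t - a))) has_real_derivative d) (at t) \<and> d \<le> 0"
      by blast
  qed (intro continuous_intros assms(2))
  then have "z b * exp (- M * (b - a)) * exp (M * (b - a)) \<le> z a * exp (M * (b - a))"
    by (intro mult_right_mono) auto
  then show ?thesis
    by (simp add: mult.assoc flip: exp_add)
qed

lemma differential_gronwall_backward:
  fixes z z' :: "real \<Rightarrow> real"
  assumes "a \<le> b" and "continuous_on {a..b} z"
    and "\<And>t. a < t \<Longrightarrow> t < b \<Longrightarrow> (z has_real_derivative z' t) (at t)"
    and "\<And>t. a < t \<Longrightarrow> t < b \<Longrightarrow> - z' t \<le> M * z t"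
  shows "z a \<le> z b * exp (M * (b - a))"
proof -
  have "z (a + b - b) \<le> z (a + b - a) * exp (M * (b - a))"
  proof (rule differential_gronwall[OF assms(1), where z' = "\<lambda>t. - z' (a + b - t)"])
    show "continuous_on {a..b} (\<lambda>t. z (a + b - t))"
      by (intro continuous_on_compose2[OF assms(2)] continuous_intros) auto
    fix t assume t: "a < t" "t < b"
    have "(z has_real_derivative z' (a + b - t)) (at (a + b - t))"
      using t by (intro assms(3)) auto
    moreover have "((\<lambda>t. a + b - t) has_real_derivative -1) (at t)"
      by (auto intro!: derivative_eq_intros)
    ultimately show "((\<lambda>t. z (a + b - t)) has_real_derivative - z' (a + b - t)) (at t)"
      using DERIV_chain2[where f = z] by fastforce
    show "- z' (a + b - t) \<le> M * z (a + b - t)"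
      using t by (intro assms(4)) auto
  qed
  then show ?thesis by simp
qed

text \<open>
  The continuous difference quotient \<open>h\<close> (available for polynomials and \<open>C\<^sup>1\<close> functions) is the
  Lipschitz-type condition that makes equilibria unreachable in finite time.
\<close>

locale scalar_autonomous_ode =
  fixes f y :: "real \<Rightarrow> real"
  assumes difference_quotient:
      "\<And>e. \<exists>h. continuous_on UNIV h \<and> (\<forall>x. f x - f e = (x - e) * h x)"
    and solves: "\<And>t. 0 \<le> t \<Longrightarrow> (y has_real_derivative f (y t)) (at t within {0..})"
begin

lemma continuous_f: "continuous_on UNIV f"
proof -
  obtain h where h: "continuous_on UNIV h" and "\<And>x. f x - f 0 = x * h x"
    using difference_quotient[of 0] by auto
  then have "f = (\<lambda>x. x * h x + f 0)"
    by (metis diff_eq_eq)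
  moreover have "continuous_on UNIV (\<lambda>x. x * h x + f 0)"
    by (intro continuous_intros h)
  ultimately show ?thesis by metis
qed

lemma continuous_y: "continuous_on {0..} y"
  unfolding continuous_on_eq_continuous_within
  using solves DERIV_continuous by blast

lemma y_has_real_derivative: "0 < t \<Longrightarrow> (y has_real_derivative f (y t)) (at t)"
  using solves[of t] at_within_interior[of t "{0..}"] by simp

lemma equilibrium_invariant:
  assumes "f e = 0" and "0 \<le> T"
  shows "y T = e \<longleftrightarrow> y 0 = e"
proof -
  obtain h where h_cont: "continuous_on UNIV h" and f_eq: "\<And>x. f x = (x - e) * h x"
    using difference_quotient[of e] assms(1) by auto
  have y_cont: "continuous_on {0..T} y"
    using continuous_y by (rule continuous_on_subset) auto
  have "compact ((\<lambda>t. h (y t)) ` {0..T})"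
    by (intro compact_continuous_image continuous_on_compose2[OF h_cont y_cont]) auto
  then obtain M where M: "\<And>t. t \<in> {0..T} \<Longrightarrow> \<bar>h (y t)\<bar> \<le> M"
    using compact_imp_bounded bounded_iff by (metis image_eqI real_norm_def)
  \<comment> \<open>\<open>z' = 2 h(y) z\<close> with \<open>h(y)\<close> bounded: Gronwall forwards and backwards in time.\<close>
  define z where "z t = (y t - e)\<^sup>2" for t
  have z_cont: "continuous_on {0..T} z"
    unfolding z_def by (intro continuous_intros y_cont)
  have z_deriv: "(z has_real_derivative 2 * h (y t) * z t) (at t)" if "0 < t" for t
    unfolding z_def using y_has_real_derivative[OF that]
    by (auto intro!: derivative_eq_intros simp: f_eq power2_eq_square algebra_simps)
  have z_growth: "\<bar>2 * h (y t) * z t\<bar> \<le> 2 * M * z t" if "t \<in> {0..T}" for t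
    using M[OF that] by (simp add: z_def abs_mult mult_right_mono)
  have "z T \<le> z 0 * exp (2 * M * (T - 0))"
    using assms(2) z_cont z_deriv z_growth by (intro differential_gronwall) (auto simp: abs_le_iff)
  moreover have "z 0 \<le> z T * exp (2 * M * (T - 0))"
    using assms(2) z_cont z_deriv z_growth
    by (intro differential_gronwall_backward) (auto simp: abs_le_iff)
  moreover have "0 \<le> z 0" "0 \<le> z T" by (simp_all add: z_def)
  ultimately have "z T = 0 \<longleftrightarrow> z 0 = 0"
    by (auto intro: antisym)
  then show ?thesis by (simp add: z_def)
qed

lemma tendsto_equilibrium_const:
  assumes "f e = 0" and "y 0 = e"
  shows "(y \<longlongrightarrow> e) at_top"
proof (rule tendsto_eventually)
  show "eventually (\<lambda>t. y t = e) at_top"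
    unfolding eventually_at_top_linorder
    using equilibrium_invariant assms by (metis order_refl)
qed

lemma below_equilibrium:
  assumes "f e = 0" and "y 0 < e" and "0 \<le> t"
  shows "y t < e"
proof (rule ccontr)
  assume "\<not> y t < e"
  moreover have "continuous_on {0..t} y"
    using continuous_y by (rule continuous_on_subset) auto
  ultimately obtain s where "0 \<le> s" "y s = e"
    using IVT'[of y 0 e t] assms(2,3) by auto
  then show False
    using equilibrium_invariant[OF assms(1) \<open>0 \<le> s\<close>] assms(2) by simp
qed

lemma above_equilibrium:
  assumes "f e = 0" and "e < y 0" and "0 \<le> t"
  shows "e < y t"
proof (rule ccontr)
  assume "\<not> e < y t"
  moreover have "continuous_on {0..t} y"
    using continuous_y by (rule continuous_on_subset) auto
  ultimately obtain s where "0 \<le> s" "y s = e"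
    using IVT2'[of y t e 0] assms(2,3) by auto
  then show False
    using equilibrium_invariant[OF assms(1) \<open>0 \<le> s\<close>] assms(2) by simp
qed

lemma y_nondecreasing:
  assumes "\<And>t. 0 \<le> t \<Longrightarrow> 0 \<le> f (y t)" and "0 \<le> t\<^sub>1" and "t\<^sub>1 \<le> t\<^sub>2"
  shows "y t\<^sub>1 \<le> y t\<^sub>2"
proof (rule DERIV_nonneg_imp_increasing_open[OF assms(3)])
  show "continuous_on {t\<^sub>1..t\<^sub>2} y"
    using continuous_y by (rule continuous_on_subset) (use assms(2) in auto)
  fix t assume "t\<^sub>1 < t"
  then have "0 < t" using assms(2) by simp
  then show "\<exists>d. (y has_real_derivative d) (at t) \<and> 0 \<le> d"
    using y_has_real_derivative[of t] assms(1)[of t] by auto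
qed

lemma y_linear_growth:
  assumes "\<And>t. 0 < t \<Longrightarrow> t < T \<Longrightarrow> m \<le> f (y t)" and "0 \<le> T"
  shows "y 0 + m * T \<le> y T"
proof -
  have "y 0 - m * 0 \<le> y T - m * T"
  proof (rule DERIV_nonneg_imp_increasing_open[OF assms(2)])
    show "continuous_on {0..T} (\<lambda>t. y t - m * t)"
      using continuous_y by (intro continuous_intros) (auto intro: continuous_on_subset)
    fix t assume t: "0 < t" "t < T"
    have "((\<lambda>t. y t - m * t) has_real_derivative f (y t) - m) (at t)"
      using y_has_real_derivative[of t] t by (auto intro!: derivative_eq_intros)
    then show "\<exists>d. ((\<lambda>t. y t - m * t) has_real_derivative d) (at t) \<and> 0 \<le> d"
      using assms(1)[OF t] by force
  qed
  then show ?thesis by simp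
qed

lemma tendsto_bound_if_nondecreasing:
  assumes below: "\<And>t. 0 \<le> t \<Longrightarrow> y t < b"
    and nonneg: "\<And>t. 0 \<le> t \<Longrightarrow> 0 \<le> f (y t)"
    and pos: "\<And>x. y 0 \<le> x \<Longrightarrow> x < b \<Longrightarrow> 0 < f x"
  shows "(y \<longlongrightarrow> b) at_top"
proof (rule order_tendstoI)
  fix c assume "b < c"
  then show "eventually (\<lambda>t. y t < c) at_top"
    unfolding eventually_at_top_linorder using below by (meson order_less_trans)
next
  fix c assume "c < b"
  \<comment> \<open>Otherwise \<open>f \<ge> m > 0\<close> on the compact range of \<open>y\<close>, which then grows at least linearly.\<close>
  have "\<exists>T\<ge>0. c < y T"
  proof (rule ccontr)
    assume never_above: "\<not> ?thesis"
    define c' where "c' = max c (y 0)"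
    have "c' < b"
      unfolding c'_def using \<open>c < b\<close> below[of 0] by simp
    have y_range: "y t \<in> {y 0..c'}" if "0 \<le> t" for t
      using y_nondecreasing[OF nonneg, of 0 t] never_above that by (auto simp: c'_def)
    have "{y 0..c'} \<noteq> {}"
      using y_range[of 0] by auto
    from continuous_attains_inf[OF compact_Icc this continuous_on_subset[OF continuous_f subset_UNIV]]
    obtain x\<^sub>0 where x\<^sub>0: "x\<^sub>0 \<in> {y 0..c'}" and min: "\<And>x. x \<in> {y 0..c'} \<Longrightarrow> f x\<^sub>0 \<le> f x"
      by blast
    define m where "m = f x\<^sub>0"
    have "0 < m"
      unfolding m_def using x\<^sub>0 \<open>c' < b\<close> by (intro pos) auto
    define T where "T = (c' - y 0) / m + 1"
    have "0 \<le> T"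
      unfolding T_def using \<open>0 < m\<close> y_range[of 0] by simp
    then have "y 0 + m * T \<le> y T"
      using min y_range by (intro y_linear_growth) (auto simp: m_def)
    moreover have "y 0 + m * T = c' + m"
      unfolding T_def using \<open>0 < m\<close> by (simp add: field_simps)
    ultimately show False
      using y_range[OF \<open>0 \<le> T\<close>] \<open>0 < m\<close> by simp
  qed
  then obtain T where "0 \<le> T" "c < y T" by blast
  then show "eventually (\<lambda>t. c < y t) at_top"
    unfolding eventually_at_top_linorder
    using y_nondecreasing[OF nonneg] by (meson order_less_le_trans order_trans)
qed

lemma reflection: "scalar_autonomous_ode (\<lambda>x. - f (- x)) (\<lambda>t. - y t)"
proof
  fix e
  obtain h where h: "continuous_on UNIV h" and quotient: "\<And>x. f x - f (- e) = (x + e) * h x"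
    using difference_quotient[of "- e"] by auto
  have "- f (- x) - - f (- e) = (x - e) * h (- x)" for x
  proof -
    have "(x - e) * h (- x) = - ((- x + e) * h (- x))"
      by (simp add: algebra_simps)
    then show ?thesis
      using quotient[of "- x"] by linarith
  qed
  moreover have "continuous_on UNIV (\<lambda>x. h (- x))"
    by (rule continuous_on_compose2[OF h]) (auto intro: continuous_intros)
  ultimately show "\<exists>h. continuous_on UNIV h \<and> (\<forall>x. - f (- x) - - f (- e) = (x - e) * h x)"
    by blast
next
  fix t :: real assume "0 \<le> t"
  then show "((\<lambda>t. - y t) has_real_derivative - f (- (- y t))) (at t within {0..})"
    using solves by (auto intro!: derivative_eq_intros)
qed

lemma tendsto_equilibrium_from_below:
  assumes "f b = 0" and "y 0 \<le> b" and pos: "\<And>x. x < b \<Longrightarrow> 0 < f x"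
  shows "(y \<longlongrightarrow> b) at_top"
proof (cases "y 0 = b")
  case True
  then show ?thesis by (rule tendsto_equilibrium_const[OF assms(1)])
next
  case False
  then have "y 0 < b" using assms(2) by simp
  then have below: "y t < b" if "0 \<le> t" for t
    using below_equilibrium[OF assms(1) _ that] by blast
  show ?thesis
    using below pos by (intro tendsto_bound_if_nondecreasing) (auto intro: less_imp_le)
qed

lemma tendsto_upper_equilibrium:
  assumes "f a = 0" and "f b = 0" and "a < y 0" and "y 0 \<le> b"
    and pos: "\<And>x. a < x \<Longrightarrow> x < b \<Longrightarrow> 0 < f x"
  shows "(y \<longlongrightarrow> b) at_top"
proof (cases "y 0 = b")
  case True
  then show ?thesis by (rule tendsto_equilibrium_const[OF assms(2)])
next
  case False
  then have "y 0 < b" using assms(4) by simp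
  then have range: "a < y t" "y t < b" if "0 \<le> t" for t
    using below_equilibrium[OF assms(2) _ that] above_equilibrium[OF assms(1,3) that] by blast+
  show ?thesis
  proof (rule tendsto_bound_if_nondecreasing)
    show "y t < b" and "0 \<le> f (y t)" if "0 \<le> t" for t
      using range[OF that] pos less_imp_le by auto
    show "0 < f x" if "y 0 \<le> x" and "x < b" for x
      using that assms(3) pos by simp
  qed
qed

lemma tendsto_lower_equilibrium:
  assumes "f a = 0" and "f b = 0" and "a \<le> y 0" and "y 0 < b"
    and neg: "\<And>x. a < x \<Longrightarrow> x < b \<Longrightarrow> f x < 0"
  shows "(y \<longlongrightarrow> a) at_top"
proof -
  interpret reflected: scalar_autonomous_ode "\<lambda>x. - f (- x)" "\<lambda>t. - y t"
    by (rule reflection)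
  have "((\<lambda>t. - y t) \<longlongrightarrow> - a) at_top"
  proof (rule reflected.tendsto_upper_equilibrium[of "- b"])
    fix x assume "- b < x" "x < - a"
    then show "0 < - f (- x)" using neg[of "- x"] by simp
  qed (use assms(1-4) in simp_all)
  then show ?thesis
    using tendsto_minus[of "\<lambda>t. - y t" "- a"] by simp
qed

lemma tendsto_stable_equilibrium:
  assumes "f e = 0" and "f b = 0" and "y 0 < b"
    and pos: "\<And>x. x < e \<Longrightarrow> 0 < f x"
    and neg: "\<And>x. e < x \<Longrightarrow> x < b \<Longrightarrow> f x < 0"
  shows "(y \<longlongrightarrow> e) at_top"
proof (cases "y 0 \<le> e")
  case True
  then show ?thesis by (rule tendsto_equilibrium_from_below[OF assms(1) _ pos])
next
  case False
  then show ?thesis by (intro tendsto_lower_equilibrium[OF assms(1,2) _ assms(3) neg]) simp_all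
qed

end

lemma Fode_eq_quadratic: "Fode s \<gamma> u x = (1 - x) * (\<gamma> * x\<^sup>2 - (s + \<gamma>) * x + u)"
  unfolding Fode_def by (simp add: power2_eq_square algebra_simps)

lemma Fode_one: "Fode s \<gamma> u 1 = 0"
  by (simp add: Fode_eq_quadratic)

lemma Fode_difference_quotient:
  "\<exists>h. continuous_on UNIV h \<and> (\<forall>x. Fode s \<gamma> u x - Fode s \<gamma> u e = (x - e) * h x)"
proof (intro exI conjI allI)
  show "Fode s \<gamma> u x - Fode s \<gamma> u e
      = (x - e) * ((s + 2 * \<gamma>) * (x + e) - \<gamma> * (x\<^sup>2 + x * e + e\<^sup>2) - (s + \<gamma> + u))" for x
    unfolding Fode_def by (simp add: power2_eq_square algebra_simps)
qed (intro continuous_intros)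

lemma sigma_nonneg_iff:
  assumes "0 < \<gamma>"
  shows "0 \<le> sigma s \<gamma> u \<longleftrightarrow> u \<le> ucheck s \<gamma>"
proof -
  have "sigma s \<gamma> u = 4 * (ucheck s \<gamma> - u) / \<gamma>"
    using assms unfolding sigma_def ucheck_def by (simp add: field_simps power2_eq_square)
  then show ?thesis
    using assms by (simp add: zero_le_divide_iff)
qed

lemma le_ucheck:
  assumes "0 < \<gamma>"
  shows "s \<le> ucheck s \<gamma>"
proof -
  have "4 * \<gamma> * s \<le> (s + \<gamma>)\<^sup>2"
    using zero_le_power2[of "s - \<gamma>"] by (simp add: power2_eq_square algebra_simps)
  then show ?thesis
    using assms unfolding ucheck_def by (simp add: field_simps power2_eq_square)
qed

lemma ybar2_le_ybar3: "0 \<le> sigma s \<gamma> u \<Longrightarrow> ybar2 s \<gamma> u \<le> ybar3 s \<gamma> u"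
  unfolding ybar2_def ybar3_def by simp

lemma ybar_sum: "ybar2 s \<gamma> u + ybar3 s \<gamma> u = 1 + s / \<gamma>"
  unfolding ybar2_def ybar3_def by (simp add: ring_distribs)

lemma ybar_product:
  assumes "0 < \<gamma>" and "0 \<le> sigma s \<gamma> u"
  shows "ybar2 s \<gamma> u * ybar3 s \<gamma> u = u / \<gamma>"
proof -
  define A r where "A = 1 + s / \<gamma>" and "r = sqrt (sigma s \<gamma> u)"
  have "ybar2 s \<gamma> u * ybar3 s \<gamma> u = (A - r) / 2 * ((A + r) / 2)"
    unfolding ybar2_def ybar3_def A_def r_def by simp
  also have "\<dots> = (A\<^sup>2 - r\<^sup>2) / 4"
    by (simp add: power2_eq_square algebra_simps)
  also have "\<dots> = u / \<gamma>"
    using assms(2) unfolding A_def r_def sigma_def by simp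
  finally show ?thesis .
qed

lemma Fode_factorization:
  assumes "0 < \<gamma>" and "0 \<le> sigma s \<gamma> u"
  shows "Fode s \<gamma> u x = \<gamma> * (1 - x) * (x - ybar2 s \<gamma> u) * (x - ybar3 s \<gamma> u)"
proof -
  have "\<gamma> * ((x - ybar2 s \<gamma> u) * (x - ybar3 s \<gamma> u))
      = \<gamma> * (x\<^sup>2 - (ybar2 s \<gamma> u + ybar3 s \<gamma> u) * x + ybar2 s \<gamma> u * ybar3 s \<gamma> u)"
    by (simp add: power2_eq_square algebra_simps)
  also have "\<dots> = \<gamma> * x\<^sup>2 - (s + \<gamma>) * x + u"
    using assms by (simp add: ybar_sum ybar_product field_simps)
  finally show ?thesis
    by (simp add: Fode_eq_quadratic mult.assoc mult.left_commute)
qed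

lemma Fode_ybar2 [simp]: "0 < \<gamma> \<Longrightarrow> 0 \<le> sigma s \<gamma> u \<Longrightarrow> Fode s \<gamma> u (ybar2 s \<gamma> u) = 0"
  and Fode_ybar3 [simp]: "0 < \<gamma> \<Longrightarrow> 0 \<le> sigma s \<gamma> u \<Longrightarrow> Fode s \<gamma> u (ybar3 s \<gamma> u) = 0"
  by (simp_all add: Fode_factorization)

lemma one_minus_ybar_product:
  assumes "0 < \<gamma>" and "0 \<le> sigma s \<gamma> u"
  shows "(1 - ybar2 s \<gamma> u) * (1 - ybar3 s \<gamma> u) = (u - s) / \<gamma>"
proof -
  have "(1 - ybar2 s \<gamma> u) * (1 - ybar3 s \<gamma> u)
      = 1 - (ybar2 s \<gamma> u + ybar3 s \<gamma> u) + ybar2 s \<gamma> u * ybar3 s \<gamma> u"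
    by (simp add: algebra_simps)
  then show ?thesis
    using assms by (simp add: ybar_sum ybar_product diff_divide_distrib)
qed

lemma Fode_pos_if_sigma_neg:
  assumes "0 < \<gamma>" and "sigma s \<gamma> u < 0" and "x < 1"
  shows "0 < Fode s \<gamma> u x"
proof -
  have "\<gamma> * x\<^sup>2 - (s + \<gamma>) * x + u
      = \<gamma> * (x - (1 + s / \<gamma>) / 2)\<^sup>2 - \<gamma> * sigma s \<gamma> u / 4"
    using assms(1) unfolding sigma_def by (simp add: power2_eq_square field_simps)
  moreover have "0 \<le> \<gamma> * (x - (1 + s / \<gamma>) / 2)\<^sup>2" and "\<gamma> * sigma s \<gamma> u < 0"
    using assms(1,2) by (simp_all add: mult_pos_neg)
  ultimately show ?thesis
    using assms(3) by (simp add: Fode_eq_quadratic)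
qed

lemma Fode_pos_below_roots:
  assumes "0 < \<gamma>" and "0 \<le> sigma s \<gamma> u" and "x < 1" and "x < ybar2 s \<gamma> u"
  shows "0 < Fode s \<gamma> u x"
  using assms ybar2_le_ybar3[OF assms(2)]
  by (simp add: Fode_factorization zero_less_mult_iff mult_less_0_iff)

lemma Fode_neg_between_roots:
  assumes "0 < \<gamma>" and "0 \<le> sigma s \<gamma> u" and "x < 1"
    and "ybar2 s \<gamma> u < x" and "x < ybar3 s \<gamma> u"
  shows "Fode s \<gamma> u x < 0"
  using assms by (simp add: Fode_factorization zero_less_mult_iff mult_less_0_iff)

lemma Fode_pos_above_roots:
  assumes "0 < \<gamma>" and "0 \<le> sigma s \<gamma> u" and "x < 1" and "ybar3 s \<gamma> u < x"
  shows "0 < Fode s \<gamma> u x"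
  using assms ybar2_le_ybar3[OF assms(2)]
  by (simp add: Fode_factorization zero_less_mult_iff mult_less_0_iff)

lemma ybar2_lt_one_le_ybar3:
  assumes "0 < \<gamma>" and "u < s \<or> u = s \<and> s < \<gamma>"
  shows "0 \<le> sigma s \<gamma> u" and "ybar2 s \<gamma> u < 1" and "1 \<le> ybar3 s \<gamma> u"
proof -
  show sigma: "0 \<le> sigma s \<gamma> u"
    using assms le_ucheck[OF assms(1), of s] sigma_nonneg_iff[OF assms(1)] by auto
  have "(1 - ybar2 s \<gamma> u) * (1 - ybar3 s \<gamma> u) \<le> 0"
    using one_minus_ybar_product[OF assms(1) sigma] assms by (auto simp: divide_nonpos_pos)
  moreover have "ybar2 s \<gamma> u + ybar3 s \<gamma> u < 2" if "u = s" "s < \<gamma>"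
    using ybar_sum[of s \<gamma> u] that assms(1) by simp
  moreover have "(1 - ybar2 s \<gamma> u) * (1 - ybar3 s \<gamma> u) < 0" if "u < s"
    using one_minus_ybar_product[OF assms(1) sigma] that assms(1) by (simp add: divide_neg_pos)
  ultimately show "ybar2 s \<gamma> u < 1" and "1 \<le> ybar3 s \<gamma> u"
    using ybar2_le_ybar3[OF sigma] assms(2)
    by (auto simp: mult_le_0_iff mult_less_0_iff)
qed

lemma ybar3_lt_one:
  assumes "0 < \<gamma>" and "0 \<le> sigma s \<gamma> u" and "s < \<gamma>" and "s < u"
  shows "ybar3 s \<gamma> u < 1"
proof -
  have "0 < (1 - ybar2 s \<gamma> u) * (1 - ybar3 s \<gamma> u)"
    using one_minus_ybar_product[OF assms(1,2)] assms by simp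
  moreover have "ybar2 s \<gamma> u + ybar3 s \<gamma> u < 2"
    using ybar_sum[of s \<gamma> u] assms(1,3) by simp
  ultimately show ?thesis
    using ybar2_le_ybar3[OF assms(2)] by (auto simp: zero_less_mult_iff)
qed

lemma one_le_ybar2:
  assumes "0 < \<gamma>" and "0 \<le> sigma s \<gamma> u" and "\<gamma> \<le> s" and "s \<le> u"
  shows "1 \<le> ybar2 s \<gamma> u"
proof -
  have "0 \<le> (1 - ybar2 s \<gamma> u) * (1 - ybar3 s \<gamma> u)"
    using one_minus_ybar_product[OF assms(1,2)] assms by simp
  moreover have "2 \<le> ybar2 s \<gamma> u + ybar3 s \<gamma> u"
    using ybar_sum[of s \<gamma> u] assms(1,3) by simp
  ultimately show ?thesis
    using ybar2_le_ybar3[OF assms(2)] by (auto simp: zero_le_mult_iff)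
qed

locale Fode_solution =
  fixes s \<gamma> u y\<^sub>0 :: real and y :: "real \<Rightarrow> real"
  assumes gamma_pos: "0 < \<gamma>"
    and solution: "is_solution s \<gamma> u y\<^sub>0 y"
begin

sublocale scalar_autonomous_ode "Fode s \<gamma> u" y
proof
  show "\<exists>h. continuous_on UNIV h \<and> (\<forall>x. Fode s \<gamma> u x - Fode s \<gamma> u e = (x - e) * h x)" for e
    by (rule Fode_difference_quotient)
  show "(y has_real_derivative Fode s \<gamma> u (y t)) (at t within {0..})" if "0 \<le> t" for t
    using solution that unfolding is_solution_def by blast
qed

lemma initial_value: "y 0 = y\<^sub>0"
  using solution unfolding is_solution_def by blast

lemma tendsto_ybar2_if_u_le_s:
  assumes "u < s \<or> u = s \<and> s < \<gamma>" and "y\<^sub>0 < 1"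
  shows "(y \<longlongrightarrow> ybar2 s \<gamma> u) at_top"
proof -
  note roots = ybar2_lt_one_le_ybar3[OF gamma_pos assms(1)]
  show ?thesis
  proof (rule tendsto_stable_equilibrium[OF _ Fode_one])
    show "Fode s \<gamma> u (ybar2 s \<gamma> u) = 0"
      using gamma_pos roots(1) by simp
    show "0 < Fode s \<gamma> u x" if "x < ybar2 s \<gamma> u" for x
      using that roots by (intro Fode_pos_below_roots gamma_pos) auto
    show "Fode s \<gamma> u x < 0" if "ybar2 s \<gamma> u < x" and "x < 1" for x
      using that roots by (intro Fode_neg_between_roots gamma_pos) auto
  qed (simp add: initial_value assms(2))
qed

lemma tendsto_ybar2_below_ybar3:
  assumes "s < \<gamma>" and "s < u" and "u \<le> ucheck s \<gamma>" and "y\<^sub>0 < ybar3 s \<gamma> u"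
  shows "(y \<longlongrightarrow> ybar2 s \<gamma> u) at_top"
proof -
  have sigma: "0 \<le> sigma s \<gamma> u"
    using sigma_nonneg_iff[OF gamma_pos] assms(3) by simp
  have "ybar3 s \<gamma> u < 1"
    using ybar3_lt_one[OF gamma_pos sigma assms(1,2)] .
  show ?thesis
  proof (rule tendsto_stable_equilibrium[of _ "ybar3 s \<gamma> u"])
    show "0 < Fode s \<gamma> u x" if "x < ybar2 s \<gamma> u" for x
      using that \<open>ybar3 s \<gamma> u < 1\<close> ybar2_le_ybar3[OF sigma]
      by (intro Fode_pos_below_roots gamma_pos sigma) auto
    show "Fode s \<gamma> u x < 0" if "ybar2 s \<gamma> u < x" and "x < ybar3 s \<gamma> u" for x
      using that \<open>ybar3 s \<gamma> u < 1\<close> by (intro Fode_neg_between_roots gamma_pos sigma) auto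
  qed (use gamma_pos sigma assms(4) initial_value in simp_all)
qed

lemma tendsto_one_above_ybar3:
  assumes "s < \<gamma>" and "s < u" and "u \<le> ucheck s \<gamma>"
    and "ybar3 s \<gamma> u < y\<^sub>0" and "y\<^sub>0 \<le> 1"
  shows "(y \<longlongrightarrow> 1) at_top"
proof -
  have sigma: "0 \<le> sigma s \<gamma> u"
    using sigma_nonneg_iff[OF gamma_pos] assms(3) by simp
  show ?thesis
  proof (rule tendsto_upper_equilibrium[of "ybar3 s \<gamma> u"])
    show "0 < Fode s \<gamma> u x" if "ybar3 s \<gamma> u < x" and "x < 1" for x
      using that by (intro Fode_pos_above_roots gamma_pos sigma)
  qed (use gamma_pos sigma assms(4,5) initial_value Fode_one in simp_all)
qed

lemma tendsto_one_if_no_root_below_one: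
  assumes "ucheck s \<gamma> < u \<or> \<gamma> \<le> s \<and> s \<le> u \<and> u \<le> ucheck s \<gamma>" and "y\<^sub>0 \<le> 1"
  shows "(y \<longlongrightarrow> 1) at_top"
proof (rule tendsto_equilibrium_from_below[OF Fode_one])
  show "y 0 \<le> 1"
    using assms(2) initial_value by simp
  fix x :: real assume "x < 1"
  show "0 < Fode s \<gamma> u x"
  proof (cases "ucheck s \<gamma> < u")
    case True
    then have "sigma s \<gamma> u < 0"
      using sigma_nonneg_iff[OF gamma_pos, of s u] by auto
    then show ?thesis
      using Fode_pos_if_sigma_neg[OF gamma_pos _ \<open>x < 1\<close>] by simp
  next
    case False
    then have sigma: "0 \<le> sigma s \<gamma> u"
      using sigma_nonneg_iff[OF gamma_pos] by simp
    have "1 \<le> ybar2 s \<gamma> u"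
      using False assms(1) by (intro one_le_ybar2[OF gamma_pos sigma]) auto
    then show ?thesis
      using \<open>x < 1\<close> by (intro Fode_pos_below_roots[OF gamma_pos sigma]) auto
  qed
qed

end

theorem corollary2p4:
  fixes s \<gamma> u y0 :: real and y :: "real \<Rightarrow> real"
  assumes "s > 0" and "\<gamma> > 0" and "u > 0"
    and "y0 \<in> {0..1}"
    and "is_solution s \<gamma> u y0 y"
  shows
   "(((0 < u \<and> u < s) \<or> (u = s \<and> s < \<gamma>)) \<longrightarrow>
       (y0 \<in> {0..<1} \<longrightarrow> (y \<longlongrightarrow> ybar2 s \<gamma> u) at_top) \<and>
       (y0 = 1 \<longrightarrow> (y \<longlongrightarrow> ybar1) at_top))
  \<and> ((s < \<gamma> \<and> s < u \<and> u \<le> ucheck s \<gamma>) \<longrightarrow>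
       (y0 \<in> {0..<ybar3 s \<gamma> u} \<longrightarrow> (y \<longlongrightarrow> ybar2 s \<gamma> u) at_top) \<and>
       (y0 = ybar3 s \<gamma> u \<longrightarrow> (y \<longlongrightarrow> ybar3 s \<gamma> u) at_top) \<and>
       (y0 \<in> {ybar3 s \<gamma> u<..ybar1} \<longrightarrow> (y \<longlongrightarrow> ybar1) at_top))
  \<and> ((u > ucheck s \<gamma> \<or> (s \<ge> \<gamma> \<and> s \<le> u \<and> u \<le> ucheck s \<gamma>)) \<longrightarrow>
       (y \<longlongrightarrow> ybar1) at_top)"
proof -
  interpret Fode_solution s \<gamma> u y0 y
    using assms(2,5) by unfold_locales
  have "y0 \<le> 1"
    using assms(4) by simp
  have equilibrium_start: "(y \<longlongrightarrow> y0) at_top" if "Fode s \<gamma> u y0 = 0"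
    using tendsto_equilibrium_const[OF that] initial_value by simp
  have "0 \<le> sigma s \<gamma> u" if "u \<le> ucheck s \<gamma>"
    using sigma_nonneg_iff[OF assms(2)] that by simp
  then show ?thesis
    unfolding ybar1_def
    using tendsto_ybar2_if_u_le_s tendsto_ybar2_below_ybar3 tendsto_one_above_ybar3
      tendsto_one_if_no_root_below_one[OF _ \<open>y0 \<le> 1\<close>] equilibrium_start Fode_one assms(2)
    by auto
qed

end
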